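(* Let $(\mathbf{H},m,\Delta)$ be a commutative and cocommutative set Hopf monoid, and equip each $\mathbf{H}[I]$ with the reassembly partial order $\le_r$. Then $\mathbf{H}$ is a poset Hopf monoid with respect to these orders, and it is self-adjoint with $\Delta\dashv m$, i.e. for every decomposition $I=S\sqcup T$ and all $x\in\mathbf{H}[I]$, $y\in\mathbf{H}[S]$, $z\in\mathbf{H}[T]$: $\Delta_{S,T}(x)\le_r(y,z)$ (product order) if and only if $x\le_r m_{S,T}(y,z)$.
   Context: A (connected) set species $\mathbf{H}$ assigns to each finite set $I$ a finite set $\mathbf{H}[I]$, with $\mathbf{H}[\emptyset]=\{1\}$, and to each bijection $f:I\to J$ a bijection $\mathbf{H}[f]$, functorially. A set Hopf monoid $(\mathbf{H},m,\Delta)$ has maps $m_{S,T}:\mathbf{H}[S]\times\mathbf{H}[T]\to\mathbf{H}[S\sqcup T]$ (natural in bijections, associative, with unit $1$) and $\Delta_{S,T}:\mathbf{H}[S\sqcup T]\to\mathbf{H}[S]\times\mathbf{H}[T]$ (natural, coassociative, counital: $\Delta_{I,\emptyset}(x)=(x,1)$, $\Delta_{\emptyset,I}(x)=(1,x)$), satisfying compatibility: for $I=S_1\sqcup S_2=T_1\sqcup T_2$, $A=S_1\cap T_1$, $B=S_1\cap T_2$, $C=S_2\cap T_1$, $D=S_2\cap T_2$, if $\Delta_{A,B}(x)=(x_A,x_B)$, $\Delta_{C,D}(y)=(y_C,y_D)$ then $\Delta_{T_1,T_2}(m_{S_1,S_2}(x,y))=(m_{A,C}(x_A,y_C),m_{B,D}(x_B,y_D))$.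 Iterated maps $m_{S_1,\dots,S_k}$, $\Delta_{S_1,\dots,S_k}$ are defined by (co)associativity. It is commutative if $m_{S,T}(x,y)=m_{T,S}(y,x)$ and cocommutative if $\Delta_{S,T}(x)=(y,z)\iff\Delta_{T,S}(x)=(z,y)$. The reassembly relation: $x\le_r y$ for $x,y\in\mathbf{H}[I]$ iff $y=m_{S_1,\dots,S_k}\circ\Delta_{S_1,\dots,S_k}(x)$ for some set partition $S_1\sqcup\dots\sqcup S_k=I$; for commutative and cocommutative $\mathbf{H}$ this is a partial order (Marberg). A poset Hopf monoid is a set Hopf monoid together with partial orders on each $\mathbf{H}[I]$ such that all relabelling maps $\mathbf{H}[f]$, all $m_{S,T}$ and all $\Delta_{S,T}$ are order-preserving (product orders on products). It is self-adjoint if the monoid $(\mathbf{H},m)$ and comonoid $(\mathbf{H},\Delta)$ form an adjoint pair, i.e. $m_{S,T}$ and $\Delta_{S,T}$ form a Galois connection for all $S,T$. *)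

theory Defs
  imports Main
begin

text \<open>
A connected set species over the label type 'a: to every finite set I :: 'a set
we assign the finite set  H I :: 'h set ; relabelling along a bijection
f : I \<rightarrow> f ` I  is  rel f I :: 'h \<Rightarrow> 'h .
Product  m S T x y , coproduct  cop S T x  (a pair).
\<close>

definition set_species ::
  "('a set \<Rightarrow> 'h set) \<Rightarrow> (('a \<Rightarrow> 'a) \<Rightarrow> 'a set \<Rightarrow> 'h \<Rightarrow> 'h) \<Rightarrow> 'h \<Rightarrow> bool" where
  "set_species H rel one \<longleftrightarrow>
     H {} = {one} \<and>
     (\<forall>I. finite I \<longrightarrow> finite (H I)) \<and>
     (\<forall>I f g. finite I \<longrightarrow> inj_on f I \<longrightarrow> (\<forall>i\<in>I. f i = g i) \<longrightarrow>
        (\<forall>x\<in>H I. rel f I x = rel g I x)) \<and>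
     (\<forall>I. finite I \<longrightarrow> (\<forall>x\<in>H I. rel id I x = x)) \<and>
     (\<forall>I f. finite I \<longrightarrow> inj_on f I \<longrightarrow> bij_betw (rel f I) (H I) (H (f ` I))) \<and>
     (\<forall>I f g. finite I \<longrightarrow> inj_on f I \<longrightarrow> inj_on g (f ` I) \<longrightarrow>
        (\<forall>x\<in>H I. rel (g \<circ> f) I x = rel g (f ` I) (rel f I x)))"

definition set_hopf_monoid ::
  "('a set \<Rightarrow> 'h set) \<Rightarrow> (('a \<Rightarrow> 'a) \<Rightarrow> 'a set \<Rightarrow> 'h \<Rightarrow> 'h) \<Rightarrow> 'h
   \<Rightarrow> ('a set \<Rightarrow> 'a set \<Rightarrow> 'h \<Rightarrow> 'h \<Rightarrow> 'h)
   \<Rightarrow> ('a set \<Rightarrow> 'a set \<Rightarrow> 'h \<Rightarrow> 'h \<times> 'h) \<Rightarrow> bool" where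
  "set_hopf_monoid H rel one m cop \<longleftrightarrow>
     set_species H rel one \<and>
     \<comment> \<open>well-typedness\<close>
     (\<forall>S T. finite S \<longrightarrow> finite T \<longrightarrow> S \<inter> T = {} \<longrightarrow>
        (\<forall>x\<in>H S. \<forall>y\<in>H T. m S T x y \<in> H (S \<union> T))) \<and>
     (\<forall>S T. finite S \<longrightarrow> finite T \<longrightarrow> S \<inter> T = {} \<longrightarrow>
        (\<forall>x\<in>H (S \<union> T). cop S T x \<in> H S \<times> H T)) \<and>
     \<comment> \<open>naturality\<close>
     (\<forall>S T f. finite S \<longrightarrow> finite T \<longrightarrow> S \<inter> T = {} \<longrightarrow> inj_on f (S \<union> T) \<longrightarrow>
        (\<forall>x\<in>H S. \<forall>y\<in>H T.
           m (f ` S) (f ` T) (rel f S x) (rel f T y) = rel f (S \<union> T) (m S T x y))) \<and>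
     (\<forall>S T f. finite S \<longrightarrow> finite T \<longrightarrow> S \<inter> T = {} \<longrightarrow> inj_on f (S \<union> T) \<longrightarrow>
        (\<forall>x\<in>H (S \<union> T).
           cop (f ` S) (f ` T) (rel f (S \<union> T) x) = map_prod (rel f S) (rel f T) (cop S T x))) \<and>
     \<comment> \<open>associativity and unit\<close>
     (\<forall>R S T. finite R \<longrightarrow> finite S \<longrightarrow> finite T \<longrightarrow>
        R \<inter> S = {} \<longrightarrow> R \<inter> T = {} \<longrightarrow> S \<inter> T = {} \<longrightarrow>
        (\<forall>x\<in>H R. \<forall>y\<in>H S. \<forall>z\<in>H T.
           m (R \<union> S) T (m R S x y) z = m R (S \<union> T) x (m S T y z))) \<and>
     (\<forall>I. finite I \<longrightarrow> (\<forall>x\<in>H I. m {} I one x = x \<and> m I {} x one = x)) \<and>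
     \<comment> \<open>coassociativity and counit\<close>
     (\<forall>R S T. finite R \<longrightarrow> finite S \<longrightarrow> finite T \<longrightarrow>
        R \<inter> S = {} \<longrightarrow> R \<inter> T = {} \<longrightarrow> S \<inter> T = {} \<longrightarrow>
        (\<forall>x\<in>H (R \<union> S \<union> T).
           (let (a, b) = cop (R \<union> S) T x; (c, d) = cop R (S \<union> T) x
            in fst (cop R S a) = c \<and> snd (cop R S a) = fst (cop S T d) \<and> b = snd (cop S T d)))) \<and>
     (\<forall>I. finite I \<longrightarrow> (\<forall>x\<in>H I. cop I {} x = (x, one) \<and> cop {} I x = (one, x))) \<and>
     \<comment> \<open>compatibility\<close>
     (\<forall>S1 S2 T1 T2. finite S1 \<longrightarrow> finite S2 \<longrightarrow> S1 \<inter> S2 = {} \<longrightarrow>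
        T1 \<inter> T2 = {} \<longrightarrow> T1 \<union> T2 = S1 \<union> S2 \<longrightarrow>
        (\<forall>x\<in>H S1. \<forall>y\<in>H S2.
           (let A = S1 \<inter> T1; B = S1 \<inter> T2; C = S2 \<inter> T1; D = S2 \<inter> T2;
                (xA, xB) = cop A B x; (yC, yD) = cop C D y
            in cop T1 T2 (m S1 S2 x y) = (m A C xA yC, m B D xB yD))))"

definition commutative_hm :: "('a set \<Rightarrow> 'h set) \<Rightarrow> ('a set \<Rightarrow> 'a set \<Rightarrow> 'h \<Rightarrow> 'h \<Rightarrow> 'h) \<Rightarrow> bool" where
  "commutative_hm H m \<longleftrightarrow>
     (\<forall>S T. finite S \<longrightarrow> finite T \<longrightarrow> S \<inter> T = {} \<longrightarrow>
        (\<forall>x\<in>H S. \<forall>y\<in>H T. m S T x y = m T S y x))"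

definition cocommutative_hm :: "('a set \<Rightarrow> 'h set) \<Rightarrow> ('a set \<Rightarrow> 'a set \<Rightarrow> 'h \<Rightarrow> 'h \<times> 'h) \<Rightarrow> bool" where
  "cocommutative_hm H cop \<longleftrightarrow>
     (\<forall>S T. finite S \<longrightarrow> finite T \<longrightarrow> S \<inter> T = {} \<longrightarrow>
        (\<forall>x\<in>H (S \<union> T). cop T S x = prod.swap (cop S T x)))"

text \<open>Iterated  m_{S1,...,Sk} \<circ> \<Delta>_{S1,...,Sk}  (right-nested bracketing).\<close>
fun reassemble ::
  "('a set \<Rightarrow> 'a set \<Rightarrow> 'h \<Rightarrow> 'h \<Rightarrow> 'h) \<Rightarrow> ('a set \<Rightarrow> 'a set \<Rightarrow> 'h \<Rightarrow> 'h \<times> 'h)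
   \<Rightarrow> 'a set list \<Rightarrow> 'h \<Rightarrow> 'h" where
  "reassemble m cop [] x = x"
| "reassemble m cop [S] x = x"
| "reassemble m cop (S # S' # Ss) x =
     (let R = \<Union> (set (S' # Ss)); (a, b) = cop S R x
      in m S R a (reassemble m cop (S' # Ss) b))"

definition is_set_partition :: "'a set \<Rightarrow> 'a set list \<Rightarrow> bool" where
  "is_set_partition I Ss \<longleftrightarrow>
     \<Union> (set Ss) = I \<and> (\<forall>S\<in>set Ss. S \<noteq> {}) \<and>
     (\<forall>i<length Ss. \<forall>j<length Ss. i \<noteq> j \<longrightarrow> Ss ! i \<inter> Ss ! j = {})"

definition reassembly_le ::
  "('a set \<Rightarrow> 'h set) \<Rightarrow> ('a set \<Rightarrow> 'a set \<Rightarrow> 'h \<Rightarrow> 'h \<Rightarrow> 'h) \<Rightarrow> ('a set \<Rightarrow> 'a set \<Rightarrow> 'h \<Rightarrow> 'h \<times> 'h)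
   \<Rightarrow> 'a set \<Rightarrow> 'h \<Rightarrow> 'h \<Rightarrow> bool" where
  "reassembly_le H m cop I x y \<longleftrightarrow>
     x \<in> H I \<and> y \<in> H I \<and> (\<exists>Ss. is_set_partition I Ss \<and> y = reassemble m cop Ss x)"

definition poset_hopf_monoid ::
  "('a set \<Rightarrow> 'h set) \<Rightarrow> (('a \<Rightarrow> 'a) \<Rightarrow> 'a set \<Rightarrow> 'h \<Rightarrow> 'h) \<Rightarrow> 'h
   \<Rightarrow> ('a set \<Rightarrow> 'a set \<Rightarrow> 'h \<Rightarrow> 'h \<Rightarrow> 'h)
   \<Rightarrow> ('a set \<Rightarrow> 'a set \<Rightarrow> 'h \<Rightarrow> 'h \<times> 'h) \<Rightarrow> ('a set \<Rightarrow> 'h \<Rightarrow> 'h \<Rightarrow> bool) \<Rightarrow> bool" where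
  "poset_hopf_monoid H rel one m cop le \<longleftrightarrow>
     set_hopf_monoid H rel one m cop \<and>
     (\<forall>I. finite I \<longrightarrow> partial_order_on (H I) {(x, y). x \<in> H I \<and> y \<in> H I \<and> le I x y}) \<and>
     (\<forall>I f. finite I \<longrightarrow> inj_on f I \<longrightarrow>
        (\<forall>x\<in>H I. \<forall>x'\<in>H I. le I x x' \<longrightarrow> le (f ` I) (rel f I x) (rel f I x'))) \<and>
     (\<forall>S T. finite S \<longrightarrow> finite T \<longrightarrow> S \<inter> T = {} \<longrightarrow>
        (\<forall>x\<in>H S. \<forall>x'\<in>H S. \<forall>y\<in>H T. \<forall>y'\<in>H T. le S x x' \<longrightarrow> le T y y' \<longrightarrow>
           le (S \<union> T) (m S T x y) (m S T x' y'))) \<and>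
     (\<forall>S T. finite S \<longrightarrow> finite T \<longrightarrow> S \<inter> T = {} \<longrightarrow>
        (\<forall>x\<in>H (S \<union> T). \<forall>x'\<in>H (S \<union> T). le (S \<union> T) x x' \<longrightarrow>
           le S (fst (cop S T x)) (fst (cop S T x')) \<and> le T (snd (cop S T x)) (snd (cop S T x'))))"

end

theory Submission
  imports Defs "HOL-Library.Multiset"
begin

(*
  By cocommutativity the coproduct is given by restrictions, Delta_{S,T}(x) = (x|S, x|T), so
  reassembling x along a partition multiplies the restrictions of x to the blocks, and restricting
  such a reassembly to A reassembles x|A along the traces of the blocks on A. Reassembling twice
  is therefore reassembling once along the common refinement, which gives transitivity;
  restriction and relabelling commute with reassembly in the same way and are therefore monotone.
  Reassembly is idempotent, so if x and y are reassemblies of each other then both are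
  reassemblies of y, along two common refinements that differ only in the order of their blocks;
  by commutativity this order does not matter, so x = y. For the adjunction, reassemblies of x|S
  and x|T multiply to the reassembly of x along the concatenated partition, and conversely
  m_{S,T}(y, z) restricts to y and z. Monotonicity of the product is a consequence of the
  adjunction.
*)

fun disjoint_list :: "'a set list \<Rightarrow> bool" where
  "disjoint_list [] = True"
| "disjoint_list (B # Bs) \<longleftrightarrow> B \<inter> \<Union>(set Bs) = {} \<and> disjoint_list Bs"

lemma disjoint_list_iff_nth:
  "disjoint_list Bs \<longleftrightarrow> (\<forall>i<length Bs. \<forall>j<length Bs. i \<noteq> j \<longrightarrow> Bs ! i \<inter> Bs ! j = {})"
proof (induction Bs)
  case Nil
  then show ?case by simp
next
  case (Cons B Bs)
  have pairs: "(\<forall>i<Suc n. \<forall>j<Suc n. i \<noteq> j \<longrightarrow> Q i j) \<longleftrightarrow>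
      (\<forall>j<n. Q 0 (Suc j) \<and> Q (Suc j) 0) \<and> (\<forall>i<n. \<forall>j<n. i \<noteq> j \<longrightarrow> Q (Suc i) (Suc j))"
    for n and Q :: "nat \<Rightarrow> nat \<Rightarrow> bool"
    by (auto simp: less_Suc_eq_0_disj)
  have "B \<inter> \<Union>(set Bs) = {} \<longleftrightarrow> (\<forall>C\<in>set Bs. B \<inter> C = {})"
    by blast
  also have "\<dots> \<longleftrightarrow> (\<forall>j<length Bs. B \<inter> Bs ! j = {} \<and> Bs ! j \<inter> B = {})"
    by (auto simp: all_set_conv_all_nth)
  finally show ?case
    using Cons.IH pairs[of "length Bs" "\<lambda>i j. (B # Bs) ! i \<inter> (B # Bs) ! j = {}"] by simp
qed

lemma disjoint_list_append:
  "disjoint_list (Bs @ Cs) \<longleftrightarrow> disjoint_list Bs \<and> disjoint_list Cs \<and> \<Union>(set Bs) \<inter> \<Union>(set Cs) = {}"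
  by (induction Bs) auto

lemma disjoint_list_map_Int: "disjoint_list Bs \<Longrightarrow> disjoint_list (map (\<lambda>B. B \<inter> A) Bs)"
  by (induction Bs) auto

lemma disjoint_list_filter: "disjoint_list Bs \<Longrightarrow> disjoint_list (filter P Bs)"
  by (induction Bs) auto

lemma disjoint_list_image:
  "inj_on f (\<Union>(set Bs)) \<Longrightarrow> disjoint_list Bs \<Longrightarrow> disjoint_list (map ((`) f) Bs)"
proof (induction Bs)
  case Nil
  then show ?case by simp
next
  case (Cons B Bs)
  have inj: "inj_on f (B \<union> \<Union>(set Bs))"
    using Cons.prems(1) by simp
  have "f ` B \<inter> f ` \<Union>(set Bs) = f ` (B \<inter> \<Union>(set Bs))"
    by (rule inj_on_image_Int[OF inj, symmetric]) auto
  with Cons inj_on_subset[OF inj] show ?case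
    by auto
qed

lemma is_set_partition_iff_disjoint_list:
  "is_set_partition I Bs \<longleftrightarrow> \<Union>(set Bs) = I \<and> {} \<notin> set Bs \<and> disjoint_list Bs"
  unfolding is_set_partition_def disjoint_list_iff_nth by blast

definition common_refinement :: "'a set list \<Rightarrow> 'a set list \<Rightarrow> 'a set list" where
  "common_refinement Bs Cs = concat (map (\<lambda>C. map (\<lambda>B. B \<inter> C) Bs) Cs)"

lemma Union_common_refinement:
  "\<Union>(set (common_refinement Bs Cs)) = \<Union>(set Bs) \<inter> \<Union>(set Cs)"
  by (auto simp: common_refinement_def)

lemma disjoint_list_common_refinement:
  "disjoint_list Bs \<Longrightarrow> disjoint_list Cs \<Longrightarrow> disjoint_list (common_refinement Bs Cs)"
proof (induction Cs)
  case Nil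
  then show ?case by (simp add: common_refinement_def)
next
  case (Cons C Cs)
  have "\<Union>(set (map (\<lambda>B. B \<inter> C) Bs)) \<inter> \<Union>(set (common_refinement Bs Cs)) = {}"
    using Cons.prems(2) by (auto simp: Union_common_refinement)
  with Cons show ?case
    by (simp add: common_refinement_def disjoint_list_append disjoint_list_map_Int)
qed

lemma mset_common_refinement_commute:
  "mset (common_refinement Bs Cs) = mset (common_refinement Cs Bs)"
proof -
  have swap: "mset (concat (map (\<lambda>c. map (\<lambda>b. f b c) bs) cs)) =
      mset (concat (map (\<lambda>b. map (\<lambda>c. f b c) cs) bs))" for f :: "'b \<Rightarrow> 'b \<Rightarrow> 'b" and bs cs
  proof (induction cs)
    case Nil
    then show ?case by (induction bs) auto
  next
    case (Cons c cs)
    have "mset (concat (map (\<lambda>b. f b c # map (f b) cs) bs)) =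
        mset (map (\<lambda>b. f b c) bs) + mset (concat (map (\<lambda>b. map (f b) cs) bs))"
      by (induction bs) auto
    with Cons show ?case by simp
  qed
  have "mset (common_refinement Bs Cs) = mset (concat (map (\<lambda>B. map (\<lambda>C. B \<inter> C) Cs) Bs))"
    unfolding common_refinement_def by (rule swap)
  also have "concat (map (\<lambda>B. map (\<lambda>C. B \<inter> C) Cs) Bs) = common_refinement Cs Bs"
    unfolding common_refinement_def by (intro arg_cong[where f = concat] map_cong refl) blast
  finally show ?thesis .
qed

abbreviation ground :: "('a set \<times> 'h) list \<Rightarrow> 'a set" where
  "ground ps \<equiv> \<Union>(fst ` set ps)"

locale comm_cocomm_set_hopf_monoid =
  fixes H :: "'a set \<Rightarrow> 'h set"
    and rel :: "('a \<Rightarrow> 'a) \<Rightarrow> 'a set \<Rightarrow> 'h \<Rightarrow> 'h"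
    and one :: 'h
    and m :: "'a set \<Rightarrow> 'a set \<Rightarrow> 'h \<Rightarrow> 'h \<Rightarrow> 'h"
    and cop :: "'a set \<Rightarrow> 'a set \<Rightarrow> 'h \<Rightarrow> 'h \<times> 'h"
  assumes hopf: "set_hopf_monoid H rel one m cop"
    and commutative: "commutative_hm H m"
    and cocommutative: "cocommutative_hm H cop"
begin

lemma H_empty: "H {} = {one}"
  using hopf by (simp add: set_hopf_monoid_def set_species_def)

lemma relabel_closed:
  assumes "finite I" "inj_on f I" "x \<in> H I"
  shows "rel f I x \<in> H (f ` I)"
proof -
  have "bij_betw (rel f I) (H I) (H (f ` I))"
    using hopf assms(1,2) unfolding set_hopf_monoid_def set_species_def by simp
  then show ?thesis
    using assms(3) by (rule bij_betw_apply)
qed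

lemma mult_closed:
  "finite S \<Longrightarrow> finite T \<Longrightarrow> S \<inter> T = {} \<Longrightarrow> x \<in> H S \<Longrightarrow> y \<in> H T \<Longrightarrow> m S T x y \<in> H (S \<union> T)"
  using hopf unfolding set_hopf_monoid_def by simp

lemma comult_closed:
  "finite S \<Longrightarrow> finite T \<Longrightarrow> S \<inter> T = {} \<Longrightarrow> x \<in> H (S \<union> T) \<Longrightarrow> cop S T x \<in> H S \<times> H T"
  using hopf unfolding set_hopf_monoid_def by simp

lemma relabel_mult:
  "finite S \<Longrightarrow> finite T \<Longrightarrow> S \<inter> T = {} \<Longrightarrow> inj_on f (S \<union> T) \<Longrightarrow> x \<in> H S \<Longrightarrow> y \<in> H T \<Longrightarrow>
    rel f (S \<union> T) (m S T x y) = m (f ` S) (f ` T) (rel f S x) (rel f T y)"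
  using hopf unfolding set_hopf_monoid_def by simp

lemma comult_relabel:
  "finite S \<Longrightarrow> finite T \<Longrightarrow> S \<inter> T = {} \<Longrightarrow> inj_on f (S \<union> T) \<Longrightarrow> x \<in> H (S \<union> T) \<Longrightarrow>
    cop (f ` S) (f ` T) (rel f (S \<union> T) x) = map_prod (rel f S) (rel f T) (cop S T x)"
  using hopf unfolding set_hopf_monoid_def by simp

lemma mult_assoc:
  "finite R \<Longrightarrow> finite S \<Longrightarrow> finite T \<Longrightarrow> R \<inter> S = {} \<Longrightarrow> R \<inter> T = {} \<Longrightarrow> S \<inter> T = {} \<Longrightarrow>
    x \<in> H R \<Longrightarrow> y \<in> H S \<Longrightarrow> z \<in> H T \<Longrightarrow> m (R \<union> S) T (m R S x y) z = m R (S \<union> T) x (m S T y z)"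
  using hopf unfolding set_hopf_monoid_def by simp

lemma mult_one_left: "finite I \<Longrightarrow> x \<in> H I \<Longrightarrow> m {} I one x = x"
  using hopf unfolding set_hopf_monoid_def by simp

lemma mult_one_right: "finite I \<Longrightarrow> x \<in> H I \<Longrightarrow> m I {} x one = x"
  using hopf unfolding set_hopf_monoid_def by simp

lemma mult_commute:
  "finite S \<Longrightarrow> finite T \<Longrightarrow> S \<inter> T = {} \<Longrightarrow> x \<in> H S \<Longrightarrow> y \<in> H T \<Longrightarrow> m S T x y = m T S y x"
  using commutative unfolding commutative_hm_def by blast

lemma comult_coassoc_fst:
  assumes "finite R" "finite S" "finite T" "R \<inter> S = {}" "R \<inter> T = {}" "S \<inter> T = {}"
    and "x \<in> H (R \<union> S \<union> T)"
  shows "fst (cop R S (fst (cop (R \<union> S) T x))) = fst (cop R (S \<union> T) x)"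
  using hopf assms unfolding set_hopf_monoid_def by (simp add: Let_def case_prod_beta)

lemma comult_empty_right: "finite I \<Longrightarrow> x \<in> H I \<Longrightarrow> cop I {} x = (x, one)"
  using hopf unfolding set_hopf_monoid_def by simp

lemma comult_swap:
  "finite S \<Longrightarrow> finite T \<Longrightarrow> S \<inter> T = {} \<Longrightarrow> x \<in> H (S \<union> T) \<Longrightarrow> cop T S x = prod.swap (cop S T x)"
  using cocommutative unfolding cocommutative_hm_def by blast

lemma comult_mult_fst:
  assumes "finite S1" "finite S2" "S1 \<inter> S2 = {}" "T1 \<inter> T2 = {}" "T1 \<union> T2 = S1 \<union> S2"
    and "x \<in> H S1" "y \<in> H S2"
  shows "fst (cop T1 T2 (m S1 S2 x y)) =
    m (S1 \<inter> T1) (S2 \<inter> T1) (fst (cop (S1 \<inter> T1) (S1 \<inter> T2) x)) (fst (cop (S2 \<inter> T1) (S2 \<inter> T2) y))"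
  using hopf assms unfolding set_hopf_monoid_def by (simp add: Let_def case_prod_beta)

definition restr :: "'a set \<Rightarrow> 'a set \<Rightarrow> 'h \<Rightarrow> 'h" where
  "restr I A x = fst (cop A (I - A) x)"

lemma restr_closed:
  assumes "finite I" "A \<subseteq> I" "x \<in> H I"
  shows "restr I A x \<in> H A"
proof -
  have "A \<union> (I - A) = I"
    using assms(2) by blast
  then have "cop A (I - A) x \<in> H A \<times> H (I - A)"
    using comult_closed[of A "I - A" x] assms finite_subset by auto
  then show ?thesis
    unfolding restr_def by auto
qed

lemma restr_same: "finite I \<Longrightarrow> x \<in> H I \<Longrightarrow> restr I I x = x"
  unfolding restr_def by (simp add: comult_empty_right)

lemma restr_empty: "finite I \<Longrightarrow> x \<in> H I \<Longrightarrow> restr I {} x = one"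
  using restr_closed[of I "{}" x] H_empty by auto

lemma restr_restr:
  assumes "finite I" "A \<subseteq> B" "B \<subseteq> I" "x \<in> H I"
  shows "restr B A (restr I B x) = restr I A x"
proof -
  have parts: "A \<union> (B - A) = B" "(B - A) \<union> (I - B) = I - A" "A \<union> (B - A) \<union> (I - B) = I"
    using assms(2,3) by blast+
  have fin: "finite A" "finite (B - A)" "finite (I - B)"
    using assms(1-3) by (auto intro: finite_subset)
  have "fst (cop A (B - A) (fst (cop (A \<union> (B - A)) (I - B) x))) = fst (cop A ((B - A) \<union> (I - B)) x)"
    by (rule comult_coassoc_fst[OF fin]) (use assms parts(3) in auto)
  then show ?thesis
    unfolding restr_def parts(1,2) .
qed

(* The only use of cocommutativity. *)
lemma comult_eq_restr:
  assumes "finite S" "finite T" "S \<inter> T = {}" "x \<in> H (S \<union> T)"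
  shows "cop S T x = (restr (S \<union> T) S x, restr (S \<union> T) T x)"
proof -
  have "(S \<union> T) - S = T" "(S \<union> T) - T = S"
    using assms(3) by blast+
  moreover have "snd (cop S T x) = fst (cop T S x)"
    using comult_swap[OF assms] by (simp add: prod.swap_def)
  ultimately show ?thesis
    unfolding restr_def by (simp add: prod_eq_iff)
qed

lemma restr_mult:
  assumes "finite S1" "finite S2" "S1 \<inter> S2 = {}" "T \<subseteq> S1 \<union> S2" "x \<in> H S1" "y \<in> H S2"
  shows "restr (S1 \<union> S2) T (m S1 S2 x y) =
    m (S1 \<inter> T) (S2 \<inter> T) (restr S1 (S1 \<inter> T) x) (restr S2 (S2 \<inter> T) y)"
proof -
  have "S1 - S1 \<inter> T = S1 \<inter> ((S1 \<union> S2) - T)" "S2 - S2 \<inter> T = S2 \<inter> ((S1 \<union> S2) - T)"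
    by blast+
  moreover have "T \<union> ((S1 \<union> S2) - T) = S1 \<union> S2"
    using assms(4) by blast
  ultimately show ?thesis
    unfolding restr_def
    using comult_mult_fst[OF assms(1-3) _ _ assms(5,6), of T "(S1 \<union> S2) - T"] by simp
qed

lemma restr_mult_left:
  assumes "finite S" "finite T" "S \<inter> T = {}" "x \<in> H S" "y \<in> H T"
  shows "restr (S \<union> T) S (m S T x y) = x"
proof -
  have "T \<inter> S = {}"
    using assms(3) by blast
  then show ?thesis
    using restr_mult[of S T S x y] assms by (simp add: restr_same restr_empty mult_one_right)
qed

lemma restr_mult_right:
  assumes "finite S" "finite T" "S \<inter> T = {}" "x \<in> H S" "y \<in> H T"
  shows "restr (S \<union> T) T (m S T x y) = y"
  using restr_mult[of S T T x y] assms by (simp add: restr_same restr_empty mult_one_left)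

lemma comult_mult:
  assumes "finite S" "finite T" "S \<inter> T = {}" "x \<in> H S" "y \<in> H T"
  shows "cop S T (m S T x y) = (x, y)"
  using comult_eq_restr[OF assms(1-3) mult_closed[OF assms]]
    restr_mult_left[OF assms] restr_mult_right[OF assms]
  by simp

lemma relabel_restr:
  assumes "finite I" "inj_on f I" "B \<subseteq> I" "x \<in> H I"
  shows "rel f B (restr I B x) = restr (f ` I) (f ` B) (rel f I x)"
proof -
  have I: "B \<union> (I - B) = I"
    using assms(3) by blast
  have "cop (f ` B) (f ` (I - B)) (rel f (B \<union> (I - B)) x) =
      map_prod (rel f B) (rel f (I - B)) (cop B (I - B) x)"
    by (rule comult_relabel) (use assms I finite_subset in auto)
  moreover have "f ` (I - B) = f ` I - f ` B"
    using assms(2,3) by (intro inj_on_image_set_diff) auto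
  ultimately show ?thesis
    unfolding restr_def I by (metis fst_map_prod)
qed

definition valid_factors :: "('a set \<times> 'h) list \<Rightarrow> bool" where
  "valid_factors ps \<longleftrightarrow> disjoint_list (map fst ps) \<and> (\<forall>(A, a) \<in> set ps. finite A \<and> a \<in> H A)"

fun mult_list :: "('a set \<times> 'h) list \<Rightarrow> 'h" where
  "mult_list [] = one"
| "mult_list ((A, a) # ps) = m A (ground ps) a (mult_list ps)"

lemma valid_factors_Nil [simp]: "valid_factors []"
  by (simp add: valid_factors_def)

lemma valid_factors_Cons [simp]:
  "valid_factors ((A, a) # ps) \<longleftrightarrow> A \<inter> ground ps = {} \<and> finite A \<and> a \<in> H A \<and> valid_factors ps"
  by (auto simp: valid_factors_def)

lemma valid_factors_append:
  "valid_factors (ps @ qs) \<longleftrightarrow> valid_factors ps \<and> valid_factors qs \<and> ground ps \<inter> ground qs = {}"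
  by (auto simp: valid_factors_def disjoint_list_append)

lemma valid_factors_move: "valid_factors (ps @ q # qs) \<longleftrightarrow> valid_factors (q # ps @ qs)"
  by (cases q) (auto simp: valid_factors_append)

lemma finite_ground: "valid_factors ps \<Longrightarrow> finite (ground ps)"
  by (auto simp: valid_factors_def)

lemma mult_list_closed: "valid_factors ps \<Longrightarrow> mult_list ps \<in> H (ground ps)"
  by (induction ps rule: mult_list.induct) (auto simp: H_empty intro!: mult_closed finite_ground)

lemma mult_list_append:
  "valid_factors (ps @ qs) \<Longrightarrow>
    mult_list (ps @ qs) = m (ground ps) (ground qs) (mult_list ps) (mult_list qs)"
proof (induction ps rule: mult_list.induct)
  case 1
  then show ?case
    using mult_one_left[OF finite_ground mult_list_closed, of qs] by simp
next
  case (2 A a ps)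
  then have valid: "valid_factors ps" "valid_factors qs" "A \<inter> ground ps = {}" "A \<inter> ground qs = {}"
    "ground ps \<inter> ground qs = {}" "finite A" "a \<in> H A"
    by (auto simp: valid_factors_append)
  have "mult_list (((A, a) # ps) @ qs) =
      m A (ground ps \<union> ground qs) a (m (ground ps) (ground qs) (mult_list ps) (mult_list qs))"
    using 2 by (simp add: valid_factors_append)
  also have "\<dots> = m (A \<union> ground ps) (ground qs) (m A (ground ps) a (mult_list ps)) (mult_list qs)"
    by (rule mult_assoc[symmetric, OF valid(6) finite_ground finite_ground valid(3,4,5,7)
          mult_list_closed mult_list_closed])
      (fact valid)+
  finally show ?case
    by simp
qed

lemma mult_list_Cons_empty: "valid_factors (({}, a) # ps) \<Longrightarrow> mult_list (({}, a) # ps) = mult_list ps"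
  using H_empty mult_one_left[OF finite_ground mult_list_closed, of ps] by simp

lemma mult_list_filter_nonempty:
  "valid_factors ps \<Longrightarrow> mult_list (filter (\<lambda>(A, a). A \<noteq> {}) ps) = mult_list ps"
proof (induction ps rule: mult_list.induct)
  case 1
  then show ?case by simp
next
  case (2 A a ps)
  have "ground (filter (\<lambda>(A, a). A \<noteq> {}) ps) = ground ps"
    by fastforce
  with 2 mult_list_Cons_empty[of a ps] show ?case
    by auto
qed

(* The only use of commutativity. *)
lemma mult_list_swap:
  assumes "valid_factors ((A, a) # (B, b) # ps)"
  shows "mult_list ((A, a) # (B, b) # ps) = mult_list ((B, b) # (A, a) # ps)"
proof -
  let ?G = "ground ps" and ?x = "mult_list ps"
  have valid: "finite A" "finite B" "finite ?G" "A \<inter> B = {}" "A \<inter> ?G = {}" "B \<inter> ?G = {}"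
    "a \<in> H A" "b \<in> H B" "?x \<in> H ?G"
    using assms finite_ground[of ps] mult_list_closed[of ps] by auto
  have "mult_list ((A, a) # (B, b) # ps) = m A (B \<union> ?G) a (m B ?G b ?x)"
    by simp
  also have "\<dots> = m (A \<union> B) ?G (m A B a b) ?x"
    using valid by (intro mult_assoc[symmetric]) auto
  also have "\<dots> = m (B \<union> A) ?G (m B A b a) ?x"
    using valid mult_commute[of A B a b] by (simp add: Un_commute)
  also have "\<dots> = m B (A \<union> ?G) b (m A ?G a ?x)"
    using valid by (intro mult_assoc) auto
  finally show ?thesis
    by (simp add: Un_left_commute)
qed

lemma mult_list_move:
  "valid_factors (ps @ q # qs) \<Longrightarrow> mult_list (ps @ q # qs) = mult_list (q # ps @ qs)"
proof (induction ps rule: mult_list.induct)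
  case 1
  then show ?case by simp
next
  case (2 A a ps)
  obtain B b where q: "q = (B, b)"
    by fastforce
  have "mult_list (((A, a) # ps) @ q # qs) = m A (ground (q # ps @ qs)) a (mult_list (q # ps @ qs))"
    using 2 by (auto simp: Un_left_commute)
  also have "\<dots> = mult_list ((A, a) # q # ps @ qs)"
    by simp
  also have "\<dots> = mult_list (q # (A, a) # ps @ qs)"
    using "2.prems" valid_factors_move[of "(A, a) # ps" q qs]
      valid_factors_move[of "[(A, a)]" q "ps @ qs"]
    unfolding q by (intro mult_list_swap) simp
  finally show ?case
    by simp
qed

lemma mult_list_perm:
  "mset ps = mset qs \<Longrightarrow> valid_factors ps \<Longrightarrow> valid_factors qs \<Longrightarrow> mult_list ps = mult_list qs"
proof (induction ps arbitrary: qs rule: mult_list.induct)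
  case 1
  then show ?case by simp
next
  case (2 A a ps)
  then have "(A, a) \<in> set qs"
    by (metis list.set_intros(1) set_mset_mset)
  then obtain qs1 qs2 where qs: "qs = qs1 @ (A, a) # qs2"
    by (meson split_list)
  have perm: "mset ps = mset (qs1 @ qs2)"
    using "2.prems"(1) qs by simp
  have valid: "valid_factors ((A, a) # qs1 @ qs2)"
    using "2.prems"(3) qs valid_factors_move by simp
  have "mult_list qs = mult_list ((A, a) # qs1 @ qs2)"
    using qs "2.prems"(3) mult_list_move by simp
  also have "\<dots> = mult_list ((A, a) # ps)"
    using "2.IH"[OF perm] "2.prems"(2) valid perm by (simp flip: set_mset_mset)
  finally show ?case
    by simp
qed

lemma valid_factors_concat:
  assumes "disjoint_list Ts" "\<And>T. T \<in> set Ts \<Longrightarrow> valid_factors (qs T) \<and> ground (qs T) = T"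
  shows "valid_factors (concat (map qs Ts))"
  using assms by (induction Ts) (auto simp: valid_factors_append)

lemma mult_list_concat:
  assumes "disjoint_list Ts" "\<And>T. T \<in> set Ts \<Longrightarrow> valid_factors (qs T) \<and> ground (qs T) = T"
  shows "mult_list (map (\<lambda>T. (T, mult_list (qs T))) Ts) = mult_list (concat (map qs Ts))"
  using assms
proof (induction Ts)
  case Nil
  then show ?case by simp
next
  case (Cons T Ts)
  have ground: "ground (concat (map qs Ts)) = \<Union>(set Ts)"
    using Cons.prems(2) by auto
  have "mult_list (map (\<lambda>T. (T, mult_list (qs T))) (T # Ts)) =
      m (ground (qs T)) (ground (concat (map qs Ts))) (mult_list (qs T)) (mult_list (concat (map qs Ts)))"
    using Cons ground by (simp add: image_image)
  also have "\<dots> = mult_list (qs T @ concat (map qs Ts))"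
    using valid_factors_concat[OF Cons.prems] by (intro mult_list_append[symmetric]) simp
  finally show ?case
    by simp
qed

lemma restr_mult_list:
  "valid_factors ps \<Longrightarrow>
    restr (ground ps) (ground ps \<inter> B) (mult_list ps) =
      mult_list (map (\<lambda>(A, a). (A \<inter> B, restr A (A \<inter> B) a)) ps)"
proof (induction ps rule: mult_list.induct)
  case 1
  then show ?case
    using restr_same[of "{}" one] H_empty by simp
next
  case (2 A a ps)
  let ?G = "ground ps"
  have valid: "finite A" "finite ?G" "A \<inter> ?G = {}" "a \<in> H A" "mult_list ps \<in> H ?G" "valid_factors ps"
    using "2.prems" finite_ground[of ps] mult_list_closed[of ps] by auto
  have "A \<inter> ((A \<union> ?G) \<inter> B) = A \<inter> B" "?G \<inter> ((A \<union> ?G) \<inter> B) = ?G \<inter> B"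
    by blast+
  then have "restr (A \<union> ?G) ((A \<union> ?G) \<inter> B) (m A ?G a (mult_list ps)) =
      m (A \<inter> B) (?G \<inter> B) (restr A (A \<inter> B) a) (restr ?G (?G \<inter> B) (mult_list ps))"
    using restr_mult[OF valid(1-3) _ valid(4,5), of "(A \<union> ?G) \<inter> B"] by simp
  moreover have "ground (map (\<lambda>(A, a). (A \<inter> B, restr A (A \<inter> B) a)) ps) = ?G \<inter> B"
    by force
  ultimately show ?case
    using "2.IH"[OF valid(6)] by simp
qed

lemma relabel_mult_list:
  "valid_factors ps \<Longrightarrow> inj_on f (ground ps) \<Longrightarrow>
    rel f (ground ps) (mult_list ps) = mult_list (map (\<lambda>(A, a). (f ` A, rel f A a)) ps)"
proof (induction ps rule: mult_list.induct)
  case 1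
  then show ?case
    using relabel_closed[of "{}" f one] H_empty by simp
next
  case (2 A a ps)
  let ?G = "ground ps"
  have valid: "finite A" "finite ?G" "A \<inter> ?G = {}" "a \<in> H A" "mult_list ps \<in> H ?G" "valid_factors ps"
    using "2.prems" finite_ground[of ps] mult_list_closed[of ps] by auto
  have inj: "inj_on f (A \<union> ?G)"
    using "2.prems"(2) by simp
  have "rel f (A \<union> ?G) (m A ?G a (mult_list ps)) =
      m (f ` A) (f ` ?G) (rel f A a) (rel f ?G (mult_list ps))"
    using relabel_mult[OF valid(1-3) inj valid(4,5)] .
  moreover have "ground (map (\<lambda>(A, a). (f ` A, rel f A a)) ps) = f ` ?G"
    by force
  ultimately show ?case
    using "2.IH"[OF valid(6) inj_on_subset[OF inj]] by simp
qed

(* Unlike in reassemble, blocks may be empty, as they are in common refinements. *)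
definition reassembly :: "'a set \<Rightarrow> 'a set list \<Rightarrow> 'h \<Rightarrow> 'h" where
  "reassembly I Bs x = mult_list (map (\<lambda>B. (B, restr I B x)) Bs)"

lemma ground_map_pair [simp]: "ground (map (\<lambda>B. (B, g B)) Bs) = \<Union>(set Bs)"
  by (simp add: image_image)

lemma valid_factors_restr:
  "finite I \<Longrightarrow> disjoint_list Bs \<Longrightarrow> \<Union>(set Bs) \<subseteq> I \<Longrightarrow> x \<in> H I \<Longrightarrow>
    valid_factors (map (\<lambda>B. (B, restr I B x)) Bs)"
  unfolding valid_factors_def by (auto simp: o_def intro: restr_closed finite_subset)

lemma reassembly_closed:
  "finite I \<Longrightarrow> disjoint_list Bs \<Longrightarrow> \<Union>(set Bs) \<subseteq> I \<Longrightarrow> x \<in> H I \<Longrightarrow>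
    reassembly I Bs x \<in> H (\<Union>(set Bs))"
  unfolding reassembly_def using mult_list_closed[OF valid_factors_restr] by simp

lemma reassembly_single: "finite I \<Longrightarrow> x \<in> H I \<Longrightarrow> reassembly I [I] x = x"
  by (simp add: reassembly_def restr_same mult_one_right)

lemma reassembly_append:
  "finite I \<Longrightarrow> disjoint_list (Bs @ Cs) \<Longrightarrow> \<Union>(set (Bs @ Cs)) \<subseteq> I \<Longrightarrow> x \<in> H I \<Longrightarrow>
    reassembly I (Bs @ Cs) x = m (\<Union>(set Bs)) (\<Union>(set Cs)) (reassembly I Bs x) (reassembly I Cs x)"
  unfolding reassembly_def
  using mult_list_append[of "map (\<lambda>B. (B, restr I B x)) Bs" "map (\<lambda>B. (B, restr I B x)) Cs"]
    valid_factors_restr[of I "Bs @ Cs" x]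
  by simp

lemma reassembly_filter_nonempty:
  "finite I \<Longrightarrow> disjoint_list Bs \<Longrightarrow> \<Union>(set Bs) \<subseteq> I \<Longrightarrow> x \<in> H I \<Longrightarrow>
    reassembly I (filter (\<lambda>B. B \<noteq> {}) Bs) x = reassembly I Bs x"
  unfolding reassembly_def using mult_list_filter_nonempty[OF valid_factors_restr]
  by (simp add: filter_map o_def)

lemma reassembly_perm:
  assumes "mset Bs = mset Cs" "finite I" "disjoint_list Bs" "disjoint_list Cs" "\<Union>(set Bs) \<subseteq> I" "x \<in> H I"
  shows "reassembly I Bs x = reassembly I Cs x"
proof -
  have "set Bs = set Cs"
    using assms(1) by (metis set_mset_mset)
  then show ?thesis
    unfolding reassembly_def using assms valid_factors_restr
    by (intro mult_list_perm) simp_all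
qed

lemma reassembly_restr:
  assumes "finite I" "J \<subseteq> I" "\<Union>(set Bs) \<subseteq> J" "x \<in> H I"
  shows "reassembly J Bs (restr I J x) = reassembly I Bs x"
proof -
  have "restr J B (restr I J x) = restr I B x" if "B \<in> set Bs" for B
    using that assms by (intro restr_restr) auto
  then show ?thesis
    unfolding reassembly_def by (simp cong: map_cong)
qed

lemma reassemble_eq_reassembly:
  "Bs \<noteq> [] \<Longrightarrow> disjoint_list Bs \<Longrightarrow> finite (\<Union>(set Bs)) \<Longrightarrow> x \<in> H (\<Union>(set Bs)) \<Longrightarrow>
    reassemble m cop Bs x = reassembly (\<Union>(set Bs)) Bs x"
proof (induction Bs arbitrary: x)
  case Nil
  then show ?case by simp
next
  case (Cons S Bs)
  show ?case
  proof (cases Bs)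
    case Nil
    then show ?thesis
      using Cons.prems reassembly_single by simp
  next
    case (Cons S' Bs')
    let ?R = "\<Union>(set Bs)"
    let ?I = "S \<union> ?R"
    have fin: "finite S" "finite ?R" and disj: "S \<inter> ?R = {}" and x: "x \<in> H ?I"
      using "Cons.prems" by auto
    have x_R: "restr ?I ?R x \<in> H ?R"
      using fin x by (intro restr_closed) auto
    have "reassemble m cop (S # Bs) x = m S ?R (restr ?I S x) (reassemble m cop Bs (restr ?I ?R x))"
      using Cons comult_eq_restr[OF fin disj x] by (simp add: Let_def)
    also have "reassemble m cop Bs (restr ?I ?R x) = reassembly ?R Bs (restr ?I ?R x)"
      using "Cons.IH" "Cons.prems" Cons fin x_R by simp
    also have "\<dots> = reassembly ?I Bs x"
      using fin x by (intro reassembly_restr) auto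
    also have "m S ?R (restr ?I S x) (reassembly ?I Bs x) = reassembly ?I (S # Bs) x"
      by (simp add: reassembly_def image_image)
    finally show ?thesis
      by simp
  qed
qed

lemma restr_reassembly:
  assumes "finite I" "disjoint_list Bs" "\<Union>(set Bs) = I" "x \<in> H I" "A \<subseteq> I"
  shows "restr I A (reassembly I Bs x) = reassembly I (map (\<lambda>B. B \<inter> A) Bs) x"
proof -
  let ?ps = "map (\<lambda>B. (B, restr I B x)) Bs"
  have "restr I A (reassembly I Bs x) = restr (ground ?ps) (ground ?ps \<inter> A) (mult_list ?ps)"
    using assms(3,5) by (simp add: reassembly_def Int_absorb1)
  also have "\<dots> = mult_list (map (\<lambda>B. (B \<inter> A, restr B (B \<inter> A) (restr I B x))) Bs)"
    using restr_mult_list[OF valid_factors_restr[OF assms(1,2) _ assms(4)], of A] assms(3)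
    by (simp add: o_def)
  also have "\<dots> = reassembly I (map (\<lambda>B. B \<inter> A) Bs) x"
  proof -
    have "restr B (B \<inter> A) (restr I B x) = restr I (B \<inter> A) x" if "B \<in> set Bs" for B
      using that assms by (intro restr_restr) auto
    then show ?thesis
      unfolding reassembly_def by (simp cong: map_cong add: o_def)
  qed
  finally show ?thesis .
qed

lemma restr_reassembly_block:
  assumes "finite I" "disjoint_list Bs" "\<Union>(set Bs) = I" "x \<in> H I" "B \<in> set Bs"
  shows "restr I B (reassembly I Bs x) = restr I B x"
proof -
  obtain Bs1 Bs2 where Bs: "Bs = Bs1 @ B # Bs2"
    using assms(5) by (meson split_list)
  let ?R = "\<Union>(set (Bs1 @ Bs2))"
  have valid: "valid_factors (map (\<lambda>B. (B, restr I B x)) Bs)"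
    using assms by (intro valid_factors_restr) auto
  then have disj: "B \<inter> ?R = {}"
    unfolding Bs by (auto simp: valid_factors_append)
  have I: "I = B \<union> ?R"
    using assms(3) Bs by auto
  have "reassembly I Bs x = m B ?R (restr I B x) (reassembly I (Bs1 @ Bs2) x)"
    using mult_list_move[of "map (\<lambda>B. (B, restr I B x)) Bs1"] valid
    unfolding reassembly_def Bs by (simp add: image_image)
  moreover have "finite B" "finite ?R"
    using assms(1) I by (metis finite_Un)+
  moreover have "restr I B x \<in> H B"
    using assms(1,4) I by (intro restr_closed) auto
  moreover have "reassembly I (Bs1 @ Bs2) x \<in> H ?R"
    using assms Bs I by (intro reassembly_closed) (auto simp: disjoint_list_append)
  ultimately show ?thesis
    using restr_mult_left[of B ?R] disj I by simp
qed

lemma reassembly_idem: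
  assumes "finite I" "disjoint_list Bs" "\<Union>(set Bs) = I" "x \<in> H I"
  shows "reassembly I Bs (reassembly I Bs x) = reassembly I Bs x"
  using restr_reassembly_block[OF assms] unfolding reassembly_def by (simp cong: map_cong)

lemma reassembly_reassembly:
  assumes "finite I" "disjoint_list Bs" "disjoint_list Cs" "\<Union>(set Bs) = I" "\<Union>(set Cs) = I" "x \<in> H I"
  shows "reassembly I Cs (reassembly I Bs x) = reassembly I (common_refinement Bs Cs) x"
proof -
  define qs where "qs C = map (\<lambda>B. (B, restr I B x)) (map (\<lambda>B. B \<inter> C) Bs)" for C
  have "reassembly I Cs (reassembly I Bs x) = mult_list (map (\<lambda>C. (C, mult_list (qs C))) Cs)"
  proof -
    have "restr I C (reassembly I Bs x) = mult_list (qs C)" if "C \<in> set Cs" for C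
      using that assms restr_reassembly[OF assms(1,2,4,6), of C] unfolding qs_def reassembly_def by auto
    then show ?thesis
      unfolding reassembly_def by (simp cong: map_cong)
  qed
  also have "\<dots> = mult_list (concat (map qs Cs))"
  proof (rule mult_list_concat[OF assms(3)])
    fix C
    assume "C \<in> set Cs"
    then have "C \<subseteq> I"
      using assms(5) by blast
    have "valid_factors (qs C)"
      unfolding qs_def using assms by (intro valid_factors_restr) (auto simp: disjoint_list_map_Int)
    moreover have "ground (qs C) = C"
      unfolding qs_def using \<open>C \<subseteq> I\<close> assms(4) by auto
    ultimately show "valid_factors (qs C) \<and> ground (qs C) = C" ..
  qed
  also have "concat (map qs Cs) = map (\<lambda>B. (B, restr I B x)) (common_refinement Bs Cs)"
    unfolding qs_def common_refinement_def by (simp add: map_concat o_def)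
  finally show ?thesis
    unfolding reassembly_def .
qed

lemma relabel_reassembly:
  assumes "finite I" "inj_on f I" "disjoint_list Bs" "\<Union>(set Bs) = I" "x \<in> H I"
  shows "rel f I (reassembly I Bs x) = reassembly (f ` I) (map ((`) f) Bs) (rel f I x)"
proof -
  have "rel f I (reassembly I Bs x) = mult_list (map (\<lambda>B. (f ` B, rel f B (restr I B x))) Bs)"
    using relabel_mult_list[OF valid_factors_restr[OF assms(1,3) _ assms(5)], of f] assms(2,4)
    by (simp add: reassembly_def o_def)
  also have "\<dots> = reassembly (f ` I) (map ((`) f) Bs) (rel f I x)"
  proof -
    have "rel f B (restr I B x) = restr (f ` I) (f ` B) (rel f I x)" if "B \<in> set Bs" for B
      using that assms by (intro relabel_restr) auto
    then show ?thesis
      unfolding reassembly_def by (simp cong: map_cong add: o_def)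
  qed
  finally show ?thesis .
qed

abbreviation le_r :: "'a set \<Rightarrow> 'h \<Rightarrow> 'h \<Rightarrow> bool" where
  "le_r \<equiv> reassembly_le H m cop"

lemma reassembly_leE:
  assumes "finite I" "le_r I x y"
  obtains Bs where "x \<in> H I" "disjoint_list Bs" "\<Union>(set Bs) = I" "y = reassembly I Bs x"
proof -
  obtain Bs where x: "x \<in> H I" and part: "is_set_partition I Bs" and y: "y = reassemble m cop Bs x"
    using assms(2) unfolding reassembly_le_def by blast
  then have Bs: "disjoint_list Bs" "\<Union>(set Bs) = I"
    by (simp_all add: is_set_partition_iff_disjoint_list)
  show ?thesis
  proof (cases "Bs = []")
    case True
    then have "y = reassembly I [] x"
      using x y Bs H_empty by (simp add: reassembly_def)
    with x True Bs show ?thesis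
      using that by blast
  next
    case False
    then show ?thesis
      using that x Bs y reassemble_eq_reassembly assms(1) by auto
  qed
qed

lemma reassembly_le_reassembly:
  assumes "finite I" "x \<in> H I" "disjoint_list Bs" "\<Union>(set Bs) = I"
  shows "le_r I x (reassembly I Bs x)"
proof -
  define Cs where "Cs = filter (\<lambda>B. B \<noteq> {}) Bs"
  have part: "is_set_partition I Cs"
    using assms(3,4) unfolding Cs_def is_set_partition_iff_disjoint_list
    by (auto simp: disjoint_list_filter)
  have closed: "reassembly I Bs x \<in> H I"
    using reassembly_closed assms by auto
  have "reassembly I Bs x = reassemble m cop Cs x"
  proof (cases "Cs = []")
    case True
    then have "I = {}"
      using part by (simp add: is_set_partition_iff_disjoint_list)
    then show ?thesis
      using assms(2) closed H_empty True by simp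
  next
    case False
    have "reassembly I Bs x = reassembly I Cs x"
      using reassembly_filter_nonempty assms unfolding Cs_def by simp
    with False show ?thesis
      using assms(1,2) part reassemble_eq_reassembly by (simp add: is_set_partition_iff_disjoint_list)
  qed
  then show ?thesis
    unfolding reassembly_le_def using assms(2) closed part by blast
qed

lemma reassembly_le_refl: "finite I \<Longrightarrow> x \<in> H I \<Longrightarrow> le_r I x x"
  using reassembly_le_reassembly[of I x "[I]"] by (simp add: reassembly_single)

lemma reassembly_le_trans:
  assumes "finite I" "le_r I x y" "le_r I y z"
  shows "le_r I x z"
proof -
  obtain Bs where x: "x \<in> H I" and Bs: "disjoint_list Bs" "\<Union>(set Bs) = I"
    and y: "y = reassembly I Bs x"
    using reassembly_leE[OF assms(1,2)] by blast
  obtain Cs where Cs: "disjoint_list Cs" "\<Union>(set Cs) = I" and z: "z = reassembly I Cs y"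
    using reassembly_leE[OF assms(1,3)] by blast
  have "z = reassembly I (common_refinement Bs Cs) x"
    using reassembly_reassembly[OF assms(1) Bs(1) Cs(1) Bs(2) Cs(2) x] y z by simp
  then show ?thesis
    using x Bs Cs assms(1)
    by (simp add: reassembly_le_reassembly disjoint_list_common_refinement Union_common_refinement)
qed

lemma reassembly_le_antisym:
  assumes "finite I" "le_r I x y" "le_r I y x"
  shows "x = y"
proof -
  obtain Bs where x: "x \<in> H I" and Bs: "disjoint_list Bs" "\<Union>(set Bs) = I"
    and y_eq: "y = reassembly I Bs x"
    using reassembly_leE[OF assms(1,2)] by blast
  obtain Cs where y: "y \<in> H I" and Cs: "disjoint_list Cs" "\<Union>(set Cs) = I"
    and x_eq: "x = reassembly I Cs y"
    using reassembly_leE[OF assms(1,3)] by blast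
  have "reassembly I Bs y = y"
    using reassembly_idem[OF assms(1) Bs x] y_eq by simp
  then have "x = reassembly I (common_refinement Bs Cs) y"
    using x_eq reassembly_reassembly[OF assms(1) Bs(1) Cs(1) Bs(2) Cs(2) y] by simp
  also have "\<dots> = reassembly I (common_refinement Cs Bs) y"
    using Bs Cs assms(1) y
    by (intro reassembly_perm mset_common_refinement_commute)
      (simp_all add: disjoint_list_common_refinement Union_common_refinement)
  also have "\<dots> = reassembly I Bs (reassembly I Cs y)"
    using reassembly_reassembly[OF assms(1) Cs(1) Bs(1) Cs(2) Bs(2) y] by simp
  also have "\<dots> = y"
    unfolding x_eq[symmetric] y_eq[symmetric] ..
  finally show ?thesis .
qed

lemma partial_order_reassembly_le:
  "finite I \<Longrightarrow> partial_order_on (H I) {(x, y). x \<in> H I \<and> y \<in> H I \<and> le_r I x y}"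
  unfolding partial_order_on_def preorder_on_def refl_on_def trans_def antisym_def
  by (blast intro: reassembly_le_refl reassembly_le_trans reassembly_le_antisym)

lemma reassembly_le_relabel:
  assumes "finite I" "inj_on f I" "le_r I x x'"
  shows "le_r (f ` I) (rel f I x) (rel f I x')"
proof -
  obtain Bs where x: "x \<in> H I" and Bs: "disjoint_list Bs" "\<Union>(set Bs) = I"
    and x': "x' = reassembly I Bs x"
    using reassembly_leE[OF assms(1,3)] by blast
  have "rel f I x' = reassembly (f ` I) (map ((`) f) Bs) (rel f I x)"
    using relabel_reassembly[OF assms(1,2) Bs x] x' by simp
  moreover have "disjoint_list (map ((`) f) Bs)"
    using disjoint_list_image assms(2) Bs by blast
  moreover have "le_r (f ` I) (rel f I x) (reassembly (f ` I) (map ((`) f) Bs) (rel f I x))"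
    using \<open>disjoint_list (map ((`) f) Bs)\<close>
    by (rule reassembly_le_reassembly[rotated 2]) (use assms(1,2) x Bs(2) in \<open>auto simp: relabel_closed\<close>)
  ultimately show ?thesis
    by simp
qed

lemma reassembly_le_restr:
  assumes "finite I" "A \<subseteq> I" "le_r I x x'"
  shows "le_r A (restr I A x) (restr I A x')"
proof -
  obtain Bs where x: "x \<in> H I" and Bs: "disjoint_list Bs" "\<Union>(set Bs) = I"
    and x': "x' = reassembly I Bs x"
    using reassembly_leE[OF assms(1,3)] by blast
  have "restr I A x' = reassembly I (map (\<lambda>B. B \<inter> A) Bs) x"
    using restr_reassembly[OF assms(1) Bs x assms(2)] x' by simp
  also have "\<dots> = reassembly A (map (\<lambda>B. B \<inter> A) Bs) (restr I A x)"
    using assms(1,2) x by (intro reassembly_restr[symmetric]) auto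
  finally have "restr I A x' = reassembly A (map (\<lambda>B. B \<inter> A) Bs) (restr I A x)" .
  moreover have "le_r A (restr I A x) (reassembly A (map (\<lambda>B. B \<inter> A) Bs) (restr I A x))"
    using disjoint_list_map_Int[OF Bs(1)]
    by (rule reassembly_le_reassembly[rotated 2])
      (use assms(1,2) x Bs(2) in \<open>auto intro: restr_closed finite_subset\<close>)
  ultimately show ?thesis
    by simp
qed

lemma reassembly_le_comult:
  assumes "finite S" "finite T" "S \<inter> T = {}" "le_r (S \<union> T) x x'"
  shows "le_r S (fst (cop S T x)) (fst (cop S T x'))" "le_r T (snd (cop S T x)) (snd (cop S T x'))"
proof -
  have "x \<in> H (S \<union> T)" "x' \<in> H (S \<union> T)"
    using assms(4) by (simp_all add: reassembly_le_def)
  then show "le_r S (fst (cop S T x)) (fst (cop S T x'))" "le_r T (snd (cop S T x)) (snd (cop S T x'))"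
    using assms reassembly_le_restr[of "S \<union> T"] by (simp_all add: comult_eq_restr)
qed

lemma reassembly_le_adjunction:
  assumes "finite S" "finite T" "S \<inter> T = {}" "x \<in> H (S \<union> T)" "y \<in> H S" "z \<in> H T"
  shows "le_r S (fst (cop S T x)) y \<and> le_r T (snd (cop S T x)) z \<longleftrightarrow> le_r (S \<union> T) x (m S T y z)"
proof
  assume "le_r S (fst (cop S T x)) y \<and> le_r T (snd (cop S T x)) z"
  then have "le_r S (restr (S \<union> T) S x) y" "le_r T (restr (S \<union> T) T x) z"
    using comult_eq_restr[OF assms(1-4)] by simp_all
  then obtain Bs Cs where Bs: "disjoint_list Bs" "\<Union>(set Bs) = S" "y = reassembly S Bs (restr (S \<union> T) S x)"
    and Cs: "disjoint_list Cs" "\<Union>(set Cs) = T" "z = reassembly T Cs (restr (S \<union> T) T x)"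
    by (metis reassembly_leE assms(1,2))
  then have "y = reassembly (S \<union> T) Bs x" "z = reassembly (S \<union> T) Cs x"
    using assms(1,2,4) by (simp_all add: reassembly_restr)
  then have "m S T y z = reassembly (S \<union> T) (Bs @ Cs) x"
    using Bs Cs assms by (simp add: reassembly_append disjoint_list_append)
  then show "le_r (S \<union> T) x (m S T y z)"
    using Bs Cs assms by (simp add: reassembly_le_reassembly disjoint_list_append)
next
  assume "le_r (S \<union> T) x (m S T y z)"
  then show "le_r S (fst (cop S T x)) y \<and> le_r T (snd (cop S T x)) z"
    using reassembly_le_comult[OF assms(1-3)] comult_mult[OF assms(1-3,5,6)] by (metis fst_conv snd_conv)
qed

lemma reassembly_le_mult:
  assumes "finite S" "finite T" "S \<inter> T = {}" "le_r S x x'" "le_r T y y'"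
  shows "le_r (S \<union> T) (m S T x y) (m S T x' y')"
proof -
  have closed: "x \<in> H S" "y \<in> H T" "x' \<in> H S" "y' \<in> H T"
    using assms(4,5) by (simp_all add: reassembly_le_def)
  then have "le_r S (fst (cop S T (m S T x y))) x' \<and> le_r T (snd (cop S T (m S T x y))) y'"
    using comult_mult[OF assms(1-3)] assms(4,5) by simp
  then show ?thesis
    using reassembly_le_adjunction[OF assms(1-3) mult_closed[OF assms(1-3) closed(1,2)] closed(3,4)]
    by blast
qed

lemma poset_hopf_monoid_reassembly_le: "poset_hopf_monoid H rel one m cop le_r"
  unfolding poset_hopf_monoid_def
proof (intro conjI allI impI ballI)
  show "set_hopf_monoid H rel one m cop"
    by (fact hopf)
qed (simp_all add: partial_order_reassembly_le reassembly_le_relabel reassembly_le_mult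
    reassembly_le_comult)

end

theorem mainTheorem8:
  fixes H :: "'a set \<Rightarrow> 'h set"
    and rel :: "('a \<Rightarrow> 'a) \<Rightarrow> 'a set \<Rightarrow> 'h \<Rightarrow> 'h"
    and one :: 'h
    and m :: "'a set \<Rightarrow> 'a set \<Rightarrow> 'h \<Rightarrow> 'h \<Rightarrow> 'h"
    and cop :: "'a set \<Rightarrow> 'a set \<Rightarrow> 'h \<Rightarrow> 'h \<times> 'h"
  assumes "set_hopf_monoid H rel one m cop"
    and "commutative_hm H m"
    and "cocommutative_hm H cop"
  shows "poset_hopf_monoid H rel one m cop (reassembly_le H m cop)
    \<and> (\<forall>S T. finite S \<longrightarrow> finite T \<longrightarrow> S \<inter> T = {} \<longrightarrow>
         (\<forall>x\<in>H (S \<union> T). \<forall>y\<in>H S. \<forall>z\<in>H T.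
            (reassembly_le H m cop S (fst (cop S T x)) y \<and> reassembly_le H m cop T (snd (cop S T x)) z)
            \<longleftrightarrow> reassembly_le H m cop (S \<union> T) x (m S T y z)))"
proof -
  interpret comm_cocomm_set_hopf_monoid H rel one m cop
    using assms by unfold_locales
  show ?thesis
    using poset_hopf_monoid_reassembly_le reassembly_le_adjunction by blast
qed

end
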